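(* Let $G$ be a maximal triangle-free graph satisfying property $\mathscr{D}_3$. If $G$ contains an induced cycle of length six, then $G$ contains the Mycielski–Grötzsch graph $\Upsilon$ as a subgraph.
   Context: A graph is maximal triangle-free if it contains no triangle but adding any new edge creates a triangle. Property $\mathscr{D}_k$: for every $m\in\{1,\dots,k\}$ and every sequence $x_1,\dots,x_{3m}$ of (not necessarily distinct) vertices there is a vertex $y$ with $|\{i\in[3m]: x_iy\in E(G)\}|\ge m+1$. Mycielski–Grötzsch graph $\Upsilon$: vertices $a_j,b_j$ ($j\in\mathbb Z/5\mathbb Z$) and $c$; edges all pairs $a_jc$, $a_jb_{j\pm2}$, $b_jb_{j+2}$. *)

theory Defs
  imports Main
begin

definition graph :: "'a set \<Rightarrow> ('a \<Rightarrow> 'a \<Rightarrow> bool) \<Rightarrow> bool" where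
  "graph V E \<longleftrightarrow> finite V \<and> (\<forall>x y. E x y \<longrightarrow> x \<in> V \<and> y \<in> V)
     \<and> (\<forall>x y. E x y \<longrightarrow> E y x) \<and> (\<forall>x. \<not> E x x)"

definition triangle_free :: "'a set \<Rightarrow> ('a \<Rightarrow> 'a \<Rightarrow> bool) \<Rightarrow> bool" where
  "triangle_free V E \<longleftrightarrow>
     \<not> (\<exists>x\<in>V. \<exists>y\<in>V. \<exists>z\<in>V. E x y \<and> E y z \<and> E x z)"

definition maximal_triangle_free :: "'a set \<Rightarrow> ('a \<Rightarrow> 'a \<Rightarrow> bool) \<Rightarrow> bool" where
  "maximal_triangle_free V E \<longleftrightarrow> graph V E \<and> triangle_free V E \<and>
     (\<forall>x\<in>V. \<forall>y\<in>V. x \<noteq> y \<and> \<not> E x y \<longrightarrow> (\<exists>z\<in>V. E x z \<and> E z y))"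

definition property_D :: "nat \<Rightarrow> 'a set \<Rightarrow> ('a \<Rightarrow> 'a \<Rightarrow> bool) \<Rightarrow> bool" where
  "property_D k V E \<longleftrightarrow>
     (\<forall>m \<in> {1..k}. \<forall>x :: nat \<Rightarrow> 'a. (\<forall>i < 3*m. x i \<in> V) \<longrightarrow>
        (\<exists>y\<in>V. card {i \<in> {..<3*m}. E (x i) y} \<ge> m + 1))"

definition has_induced_C6 :: "'a set \<Rightarrow> ('a \<Rightarrow> 'a \<Rightarrow> bool) \<Rightarrow> bool" where
  "has_induced_C6 V E \<longleftrightarrow> (\<exists>v :: nat \<Rightarrow> 'a.
     (\<forall>i<6. v i \<in> V) \<and> inj_on v {..<6} \<and>
     (\<forall>i<6. \<forall>j<6. E (v i) (v j) \<longleftrightarrow> (j = (i + 1) mod 6 \<or> i = (j + 1) mod 6)))"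

text \<open>Mycielski-Groetzsch graph: vertices a_j, b_j (j in Z/5, represented by 0..4) and c.\<close>
datatype mg_vertex = MA nat | MB nat | MC

definition mg_verts :: "mg_vertex set" where
  "mg_verts = MA ` {..<5} \<union> MB ` {..<5} \<union> {MC}"

fun mg_edge0 :: "mg_vertex \<Rightarrow> mg_vertex \<Rightarrow> bool" where
  "mg_edge0 (MA j) MC = True"
| "mg_edge0 (MA j) (MB k) = (k = (j + 2) mod 5 \<or> j = (k + 2) mod 5)"
| "mg_edge0 (MB j) (MB k) = (k = (j + 2) mod 5)"
| "mg_edge0 _ _ = False"

definition mg_edge :: "mg_vertex \<Rightarrow> mg_vertex \<Rightarrow> bool" where
  "mg_edge u v \<longleftrightarrow> u \<in> mg_verts \<and> v \<in> mg_verts \<and> (mg_edge0 u v \<or> mg_edge0 v u)"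

definition contains_MG :: "'a set \<Rightarrow> ('a \<Rightarrow> 'a \<Rightarrow> bool) \<Rightarrow> bool" where
  "contains_MG V E \<longleftrightarrow> (\<exists>f :: mg_vertex \<Rightarrow> 'a.
     inj_on f mg_verts \<and> f ` mg_verts \<subseteq> V \<and>
     (\<forall>u\<in>mg_verts. \<forall>w\<in>mg_verts. mg_edge u w \<longrightarrow> E (f u) (f w)))"

end

theory Submission
  imports Defs
begin

text \<open>
  Let \<open>v\<^sub>0 \<dots> v\<^sub>5\<close> be an induced hexagon. Property \<open>\<D>\<^sub>2\<close> applied to its six vertices gives a vertex
  \<open>x\<close> adjacent to three of them, which by triangle-freeness must be alternate ones, and
  maximality gives a common neighbour \<open>s\<^sub>i\<close> of each pair of opposite vertices \<open>v\<^sub>i, v\<^sub>i\<^sub>+\<^sub>3\<close>.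
  Property \<open>\<D>\<^sub>3\<close> applied to the hexagon and the three spokes yields a vertex adjacent to two
  opposite hexagon vertices and to the two other spokes; it replaces the third spoke, so up to
  symmetry \<open>s\<^sub>0\<close> is adjacent to \<open>s\<^sub>1\<close> and \<open>s\<^sub>2\<close>. Property \<open>\<D>\<^sub>2\<close> applied to the hexagon
  \<open>v\<^sub>1 v\<^sub>2 s\<^sub>2 v\<^sub>5 v\<^sub>4 s\<^sub>1\<close> produces an eleventh vertex, and the eleven vertices span a copy of \<open>\<Upsilon>\<close>.
  Injectivity of the embedding is automatic, because any two non-adjacent vertices of \<open>\<Upsilon>\<close> are
  joined by a path of length three: an edge-preserving map into a triangle-free graph cannot
  identify them.
\<close>

lemma mg_verts_eq: "mg_verts = set [MA 0, MA 1, MA 2, MA 3, MA 4, MB 0, MB 1, MB 2, MB 3, MB 4, MC]"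
  by (auto simp: mg_verts_def lessThan_nat_numeral)

lemma mg_vertex_has_neighbour:
  assumes "u \<in> mg_verts"
  shows "\<exists>w. mg_edge u w"
proof -
  have "\<forall>u\<in>mg_verts. \<exists>w\<in>mg_verts. mg_edge u w"
    unfolding mg_edge_def mg_verts_eq by code_simp
  then show ?thesis using assms by blast
qed

lemma mg_nonadjacent_three_path:
  assumes "u \<in> mg_verts" "w \<in> mg_verts" "u \<noteq> w" "\<not> mg_edge u w"
  shows "\<exists>z z'. mg_edge u z \<and> mg_edge z z' \<and> mg_edge z' w"
proof -
  have "\<forall>u\<in>mg_verts. \<forall>w\<in>mg_verts. u = w \<or> mg_edge u w \<or>
      (\<exists>z\<in>mg_verts. \<exists>z'\<in>mg_verts. mg_edge u z \<and> mg_edge z z' \<and> mg_edge z' w)"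
    unfolding mg_edge_def mg_verts_eq by code_simp
  then show ?thesis using assms by blast
qed

lemma property_D_list:
  assumes "property_D k V E" "1 \<le> m" "m \<le> k" "length xs = 3 * m" "set xs \<subseteq> V"
  shows "\<exists>y\<in>V. m < length (filter (\<lambda>x. E x y) xs)"
proof -
  have "m \<in> {1..k}" using assms(2,3) by simp
  moreover have "\<forall>i < 3 * m. xs ! i \<in> V" using assms(4,5) by auto
  ultimately obtain y where "y \<in> V" and "m + 1 \<le> card {i \<in> {..<3 * m}. E (xs ! i) y}"
    using assms(1) unfolding property_D_def by blast
  moreover have "card {i \<in> {..<3 * m}. E (xs ! i) y} = length (filter (\<lambda>x. E x y) xs)"
    using assms(4) by (simp add: length_filter_conv_card)
  ultimately have "m < length (filter (\<lambda>x. E x y) xs)" by simp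
  with \<open>y \<in> V\<close> show ?thesis by blast
qed

locale triangle_free_graph =
  fixes V :: "'a set" and E :: "'a \<Rightarrow> 'a \<Rightarrow> bool"
  assumes graph: "graph V E" and triangle_free: "triangle_free V E"
begin

lemma edge_sym: "E a b \<Longrightarrow> E b a"
  using graph by (simp add: graph_def)

lemma edge_irrefl: "\<not> E a a"
  using graph by (simp add: graph_def)

lemma edge_in_V: "E a b \<Longrightarrow> a \<in> V"
  using graph by (simp add: graph_def)

lemma no_triangle: "E a b \<Longrightarrow> E b c \<Longrightarrow> E a c \<Longrightarrow> False"
  using triangle_free edge_in_V edge_sym unfolding triangle_free_def by blast

lemma no_common_neighbour: "E a b \<Longrightarrow> \<not> E a y \<or> \<not> E b y"
  using no_triangle edge_sym by blast

lemma contains_MG_if_hom: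
  assumes hom: "\<And>u w. mg_edge u w \<Longrightarrow> E (f u) (f w)"
  shows "contains_MG V E"
  unfolding contains_MG_def
proof (intro exI conjI ballI impI)
  show "f ` mg_verts \<subseteq> V"
    using mg_vertex_has_neighbour hom edge_in_V by blast
  show "inj_on f mg_verts"
  proof (rule inj_onI, rule ccontr)
    fix u w assume uw: "u \<in> mg_verts" "w \<in> mg_verts" "f u = f w" "u \<noteq> w"
    show False
    proof (cases "mg_edge u w")
      case True
      then show False using hom[of u w] uw(3) edge_irrefl by simp
    next
      case False
      then obtain z z' where "mg_edge u z" "mg_edge z z'" "mg_edge z' w"
        using mg_nonadjacent_three_path uw by blast
      then have "E (f u) (f z)" "E (f z) (f z')" "E (f u) (f z')"
        using hom edge_sym uw(3) by metis+
      then show False by (rule no_triangle)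
    qed
  qed
qed (rule hom)

lemma contains_MG_intro:
  assumes "E a0 c" "E a1 c" "E a2 c" "E a3 c" "E a4 c"
    "E a0 b2" "E a0 b3" "E a1 b3" "E a1 b4" "E a2 b4" "E a2 b0" "E a3 b0" "E a3 b1" "E a4 b1" "E a4 b2"
    "E b0 b2" "E b1 b3" "E b2 b4" "E b3 b0" "E b4 b1"
  shows "contains_MG V E"
proof -
  let ?f = "case_mg_vertex (\<lambda>j. [a0, a1, a2, a3, a4] ! j) (\<lambda>j. [b0, b1, b2, b3, b4] ! j) c"
  have "E (?f u) (?f w)" if "mg_edge u w" for u w
    using that assms assms[THEN edge_sym] unfolding mg_edge_def mg_verts_eq by auto
  then show ?thesis by (rule contains_MG_if_hom)
qed

definition hexagon :: "'a \<Rightarrow> 'a \<Rightarrow> 'a \<Rightarrow> 'a \<Rightarrow> 'a \<Rightarrow> 'a \<Rightarrow> bool" where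
  "hexagon v0 v1 v2 v3 v4 v5 \<longleftrightarrow>
     E v0 v1 \<and> E v1 v2 \<and> E v2 v3 \<and> E v3 v4 \<and> E v4 v5 \<and> E v5 v0"

definition spoked_hexagon :: "'a \<Rightarrow> 'a \<Rightarrow> 'a \<Rightarrow> 'a \<Rightarrow> 'a \<Rightarrow> 'a \<Rightarrow> 'a \<Rightarrow> 'a \<Rightarrow> 'a \<Rightarrow> 'a \<Rightarrow> bool" where
  "spoked_hexagon v0 v1 v2 v3 v4 v5 x s0 s1 s2 \<longleftrightarrow> hexagon v0 v1 v2 v3 v4 v5 \<and>
     E x v1 \<and> E x v3 \<and> E x v5 \<and> E s0 v0 \<and> E s0 v3 \<and> E s1 v1 \<and> E s1 v4 \<and> E s2 v2 \<and> E s2 v5"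

lemma spoked_hexagon_rotate2:
  "spoked_hexagon v0 v1 v2 v3 v4 v5 x s0 s1 s2 \<Longrightarrow> spoked_hexagon v2 v3 v4 v5 v0 v1 x s2 s0 s1"
  by (auto simp: spoked_hexagon_def hexagon_def)

lemma spoked_hexagon_replace_spoke:
  "spoked_hexagon v0 v1 v2 v3 v4 v5 x s0 s1 s2 \<Longrightarrow> E y v0 \<Longrightarrow> E y v3 \<Longrightarrow>
    spoked_hexagon v0 v1 v2 v3 v4 v5 x y s1 s2"
  by (simp add: spoked_hexagon_def)

lemma spoked_hexagon_from_even_neighbour:
  "hexagon v0 v1 v2 v3 v4 v5 \<Longrightarrow> E x v0 \<Longrightarrow> E x v2 \<Longrightarrow> E x v4 \<Longrightarrow>
    E s0 v0 \<Longrightarrow> E s0 v3 \<Longrightarrow> E s1 v1 \<Longrightarrow> E s1 v4 \<Longrightarrow> E s2 v2 \<Longrightarrow> E s2 v5 \<Longrightarrow>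
    spoked_hexagon v1 v2 v3 v4 v5 v0 x s1 s2 s0"
  by (auto simp: spoked_hexagon_def hexagon_def)

end

locale triangle_free_graph_D3 = triangle_free_graph +
  assumes property_D3: "property_D 3 V E"
begin

lemma hexagon_alternating_neighbour:
  assumes "hexagon a0 a1 a2 a3 a4 a5"
  obtains y where "E y a0" "E y a2" "E y a4" | y where "E y a1" "E y a3" "E y a5"
proof -
  have e: "E a0 a1" "E a1 a2" "E a2 a3" "E a3 a4" "E a4 a5" "E a5 a0"
    using assms by (simp_all add: hexagon_def)
  then have "set [a0, a1, a2, a3, a4, a5] \<subseteq> V" by (auto intro: edge_in_V)
  then have "\<exists>y\<in>V. 2 < length (filter (\<lambda>x. E x y) [a0, a1, a2, a3, a4, a5])"
    by (intro property_D_list[OF property_D3]) simp_all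
  then obtain y where "2 < length (filter (\<lambda>x. E x y) [a0, a1, a2, a3, a4, a5])" by blast
  then have "(E a0 y \<and> E a2 y \<and> E a4 y) \<or> (E a1 y \<and> E a3 y \<and> E a5 y)"
    using e[THEN no_common_neighbour, of y] by (auto split: if_splits)
  then show ?thesis using that edge_sym by blast
qed

lemma spoked_hexagon_dominating_spoke:
  assumes "hexagon v0 v1 v2 v3 v4 v5"
    and "E s0 v0" "E s0 v3" "E s1 v1" "E s1 v4" "E s2 v2" "E s2 v5"
  obtains y where "E y v0" "E y v3" "E y s1" "E y s2"
    | y where "E y v1" "E y v4" "E y s2" "E y s0"
    | y where "E y v2" "E y v5" "E y s0" "E y s1"
proof -
  have e: "E v0 v1" "E v1 v2" "E v2 v3" "E v3 v4" "E v4 v5" "E v5 v0"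
    using assms(1) by (simp_all add: hexagon_def)
  then have "set [v0, v1, v2, v3, v4, v5, s0, s1, s2] \<subseteq> V"
    using assms(2-) by (auto intro: edge_in_V)
  then have "\<exists>y\<in>V. 3 < length (filter (\<lambda>x. E x y) [v0, v1, v2, v3, v4, v5, s0, s1, s2])"
    by (intro property_D_list[OF property_D3]) simp_all
  then obtain y where "3 < length (filter (\<lambda>x. E x y) [v0, v1, v2, v3, v4, v5, s0, s1, s2])" by blast
  then have "(E v0 y \<and> E v3 y \<and> E s1 y \<and> E s2 y) \<or> (E v1 y \<and> E v4 y \<and> E s2 y \<and> E s0 y)
      \<or> (E v2 y \<and> E v5 y \<and> E s0 y \<and> E s1 y)"
    using e[THEN no_common_neighbour, of y] assms(2-)[THEN no_common_neighbour, of y]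
    by (auto split: if_splits)
  then show ?thesis using that edge_sym by blast
qed

lemma spoked_hexagon_adjacent_spokes_contains_MG:
  assumes "spoked_hexagon v0 v1 v2 v3 v4 v5 x s0 s1 s2" "E s0 s1" "E s0 s2"
  shows "contains_MG V E"
proof -
  have e: "E v0 v1" "E v1 v2" "E v2 v3" "E v3 v4" "E v4 v5" "E v5 v0" "E x v1" "E x v3" "E x v5"
    "E s0 v0" "E s0 v3" "E s1 v1" "E s1 v4" "E s2 v2" "E s2 v5" "E s0 s1" "E s0 s2"
    using assms by (simp_all add: spoked_hexagon_def hexagon_def)
  then have "hexagon v1 v2 s2 v5 v4 s1" by (simp add: hexagon_def edge_sym)
  then show ?thesis
  proof (rule hexagon_alternating_neighbour)
    fix y assume y: "E y v1" "E y s2" "E y v4"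
    show ?thesis
      using e y e[THEN edge_sym] y[THEN edge_sym]
      by (intro contains_MG_intro[where c = v1
            and ?a0.0 = v0 and ?a1.0 = x and ?a2.0 = v2 and ?a3.0 = y and ?a4.0 = s1
            and ?b0.0 = s2 and ?b1.0 = v4 and ?b2.0 = s0 and ?b3.0 = v5 and ?b4.0 = v3]) simp_all
  next
    fix y assume y: "E y v2" "E y v5" "E y s1"
    show ?thesis
      using e y e[THEN edge_sym] y[THEN edge_sym]
      by (intro contains_MG_intro[where c = v5
            and ?a0.0 = v0 and ?a1.0 = x and ?a2.0 = v4 and ?a3.0 = y and ?a4.0 = s2
            and ?b0.0 = s1 and ?b1.0 = v2 and ?b2.0 = s0 and ?b3.0 = v1 and ?b4.0 = v3]) simp_all
  qed
qed

lemma spoked_hexagon_contains_MG: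
  assumes sh: "spoked_hexagon v0 v1 v2 v3 v4 v5 x s0 s1 s2"
  shows "contains_MG V E"
proof -
  have "hexagon v0 v1 v2 v3 v4 v5" "E s0 v0" "E s0 v3" "E s1 v1" "E s1 v4" "E s2 v2" "E s2 v5"
    using sh by (simp_all add: spoked_hexagon_def)
  then show ?thesis
  proof (rule spoked_hexagon_dominating_spoke)
    fix y assume y: "E y v0" "E y v3" "E y s1" "E y s2"
    from spoked_hexagon_replace_spoke[OF sh y(1,2)] y(3,4)
    show ?thesis by (rule spoked_hexagon_adjacent_spokes_contains_MG)
  next
    fix y assume y: "E y v1" "E y v4" "E y s2" "E y s0"
    have "spoked_hexagon v4 v5 v0 v1 v2 v3 x s1 s2 s0"
      using spoked_hexagon_rotate2[OF spoked_hexagon_rotate2[OF sh]] .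
    from spoked_hexagon_replace_spoke[OF this y(2,1)] y(3,4)
    show ?thesis by (rule spoked_hexagon_adjacent_spokes_contains_MG)
  next
    fix y assume y: "E y v2" "E y v5" "E y s0" "E y s1"
    from spoked_hexagon_replace_spoke[OF spoked_hexagon_rotate2[OF sh] y(1,2)] y(3,4)
    show ?thesis by (rule spoked_hexagon_adjacent_spokes_contains_MG)
  qed
qed

lemma hexagon_with_diagonal_neighbours_contains_MG:
  assumes hex: "hexagon v0 v1 v2 v3 v4 v5"
    and spokes: "E s0 v0" "E s0 v3" "E s1 v1" "E s1 v4" "E s2 v2" "E s2 v5"
  shows "contains_MG V E"
  using hex
proof (rule hexagon_alternating_neighbour)
  fix x assume "E x v0" "E x v2" "E x v4"
  from spoked_hexagon_from_even_neighbour[OF hex this spokes] show ?thesis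
    by (rule spoked_hexagon_contains_MG)
next
  fix x assume "E x v1" "E x v3" "E x v5"
  with hex spokes have "spoked_hexagon v0 v1 v2 v3 v4 v5 x s0 s1 s2"
    by (simp add: spoked_hexagon_def)
  then show ?thesis by (rule spoked_hexagon_contains_MG)
qed

end

theorem lemma3p1:
  fixes V :: "'a set" and E :: "'a \<Rightarrow> 'a \<Rightarrow> bool"
  assumes "maximal_triangle_free V E"
    and "property_D 3 V E"
    and "has_induced_C6 V E"
  shows "contains_MG V E"
proof -
  interpret triangle_free_graph_D3 V E
    using assms(1,2) by unfold_locales (simp_all add: maximal_triangle_free_def)
  obtain v :: "nat \<Rightarrow> 'a" where inV: "\<forall>i<6. v i \<in> V" and inj: "inj_on v {..<6}"
    and adj: "\<forall>i<6. \<forall>j<6. E (v i) (v j) \<longleftrightarrow> (j = (i + 1) mod 6 \<or> i = (j + 1) mod 6)"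
    using assms(3) unfolding has_induced_C6_def by blast
  have diagonal: "\<exists>s. E s (v i) \<and> E s (v (i + 3))" if "i < 3" for i
  proof -
    have "v i \<in> V" "v (i + 3) \<in> V" using inV that by simp_all
    moreover have "v i \<noteq> v (i + 3)" using inj that by (auto dest: inj_onD)
    moreover have "\<not> E (v i) (v (i + 3))"
      using adj[rule_format, of i "i + 3"] that by (simp add: mod_if)
    ultimately obtain s where "E (v i) s" "E s (v (i + 3))"
      using assms(1) unfolding maximal_triangle_free_def by blast
    then show ?thesis using edge_sym by blast
  qed
  have "hexagon (v 0) (v 1) (v 2) (v 3) (v 4) (v 5)"
    using adj by (simp add: hexagon_def)
  moreover obtain s0 s1 s2
    where "E s0 (v 0)" "E s0 (v 3)" "E s1 (v 1)" "E s1 (v 4)" "E s2 (v 2)" "E s2 (v 5)"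
    using diagonal[of 0] diagonal[of 1] diagonal[of 2] by auto
  ultimately show ?thesis by (rule hexagon_with_diagonal_neighbours_contains_MG)
qed

end
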